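(* Let $p\ge2$ and $n=p-1$. Let $L$ be a linear subspace of $\mathrm{Sym}(p)$ with $L\cap\mathrm{Sym}_+(p)\neq\emptyset$ and $\dim L\le T_p-T_1=T_p-1$. Then $L$ is $n$-estimable.
   Context: $\mathrm{Sym}(p)$ denotes real symmetric $p\times p$ matrices, $\mathrm{Sym}_+(p)$ its positive definite elements, $T_k=k(k+1)/2$. $L$ is $n$-estimable if there exist $x^1,\dots,x^n\in\mathbb R^p$ such that $K=0$ is the only $K\in L$ with $Kx^i=0$ for all $i=1,\dots,n$. *)

theory Defs
  imports "HOL-Analysis.Analysis"
begin

definition sym_mats :: "(real^'n^'n) set" where
  "sym_mats = {A. transpose A = A}"

definition pd_mats :: "(real^'n^'n) set" where
  "pd_mats = {A. transpose A = A \<and> (\<forall>x::real^'n. x \<noteq> 0 \<longrightarrow> x \<bullet> (A *v x) > 0)}"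

definition T :: "nat \<Rightarrow> nat" where
  "T k = k * (k + 1) div 2"

definition n_estimable :: "nat \<Rightarrow> (real^'n^'n) set \<Rightarrow> bool" where
  "n_estimable n L \<longleftrightarrow> (\<exists>x :: nat \<Rightarrow> real^'n.
      \<forall>K\<in>L. (\<forall>i<n. K *v x i = 0) \<longrightarrow> K = 0)"

end

theory Submission
  imports Defs
begin

text \<open>If \<open>L\<close> is not \<open>(p - 1)\<close>-estimable then every rank-one matrix \<open>w w\<^sup>T\<close> lies in \<open>L\<close>:
  otherwise take \<open>p - 1\<close> vectors spanning \<open>w\<^sup>\<bottom>\<close>; a symmetric \<open>K\<close> vanishing on \<open>w\<^sup>\<bottom>\<close> is a multiple
  of \<open>w w\<^sup>T\<close>, hence lies outside \<open>L\<close> unless it is \<open>0\<close>. But the \<open>T\<^sub>p\<close> matrices \<open>1\<^sub>B 1\<^sub>B\<^sup>T\<close> with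
  \<open>|B| \<in> {1, 2}\<close> are linearly independent, contradicting \<open>dim L < T\<^sub>p\<close>.\<close>

definition outer :: "real^'n \<Rightarrow> real^'n^'n" where
  "outer w = (\<chi> i j. w$i * w$j)"

lemma outer_mult_vector: "outer w *v x = (w \<bullet> x) *\<^sub>R w"
  by (simp add: outer_def matrix_vector_mult_def vec_eq_iff inner_vec_def sum_distrib_left mult_ac)

lemma sym_matrix_eq_scaleR_outer_if_vanishing_on_hyperplane:
  fixes K :: "real^'n^'n" and w :: "real^'n"
  assumes sym: "transpose K = K" and "w \<noteq> 0"
    and vanish: "\<And>v. w \<bullet> v = 0 \<Longrightarrow> K *v v = 0"
  obtains c where "K = c *\<^sub>R outer w"
proof -
  have ww: "w \<bullet> w \<noteq> 0"
    using \<open>w \<noteq> 0\<close> by simp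
  have self_adjoint: "u \<bullet> (K *v v) = (K *v u) \<bullet> v" for u v
    by (metis sym dot_lmul_matrix vector_transpose_matrix)
  \<comment> \<open>\<open>u\<close> is orthogonal to \<open>w\<close>, so \<open>K u = 0\<close>, and symmetry gives \<open>u \<bullet> K w = 0\<close>; hence \<open>u = 0\<close>.\<close>
  define a where "a = (w \<bullet> (K *v w)) / (w \<bullet> w)"
  define u where "u = K *v w - a *\<^sub>R w"
  have "w \<bullet> u = 0"
    using ww by (simp add: u_def a_def inner_diff_right)
  then have "u \<bullet> (K *v w) = 0"
    using vanish self_adjoint by simp
  with \<open>w \<bullet> u = 0\<close> have "u \<bullet> u = 0"
    by (simp add: u_def inner_diff_right inner_commute)
  then have Kw: "K *v w = a *\<^sub>R w"
    by (simp add: u_def)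
  have "K *v x = (a / (w \<bullet> w)) *\<^sub>R outer w *v x" for x
  proof -
    define v where "v = x - ((w \<bullet> x) / (w \<bullet> w)) *\<^sub>R w"
    have "w \<bullet> v = 0"
      using ww by (simp add: v_def inner_diff_right)
    then have "K *v v = 0"
      by (rule vanish)
    then have "K *v x = ((w \<bullet> x) / (w \<bullet> w)) *\<^sub>R (K *v w)"
      by (simp add: v_def matrix_vector_mult_diff_distrib matrix_scaleR_vector_ac scaleR_matrix_vector_assoc)
    also have "\<dots> = (a / (w \<bullet> w)) *\<^sub>R (outer w *v x)"
      by (simp add: Kw outer_mult_vector)
    finally show ?thesis
      by (simp add: scaleR_matrix_vector_assoc)
  qed
  then show thesis
    using that matrix_eq by blast
qed

lemma subspace_subset_span_of_sequence:
  fixes S :: "'a::euclidean_space set"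
  obtains x :: "nat \<Rightarrow> 'a" where "S \<subseteq> span (x ` {..<dim S})"
proof -
  obtain B where B: "independent B" "S \<subseteq> span B" "card B = dim S"
    using basis_exists by blast
  obtain x where "bij_betw x {0..<card B} B"
    using ex_bij_betw_nat_finite[OF finiteI_independent[OF B(1)]] by blast
  then have "x ` {..<dim S} = B"
    using B(3) by (simp add: bij_betw_def atLeast0LessThan)
  then show thesis
    using that B(2) by blast
qed

lemma n_estimable_if_outer_notin:
  fixes L :: "(real^'n^'n) set" and w :: "real^'n"
  assumes "subspace L" "L \<subseteq> sym_mats" "w \<noteq> 0" "outer w \<notin> L"
  shows "n_estimable (CARD('n) - 1) L"
proof -
  obtain x :: "nat \<Rightarrow> real^'n" where x: "{v. w \<bullet> v = 0} \<subseteq> span (x ` {..<CARD('n) - 1})"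
    using subspace_subset_span_of_sequence[of "{v. w \<bullet> v = 0}"] dim_hyperplane[OF \<open>w \<noteq> 0\<close>]
    by auto
  have "K = 0" if "K \<in> L" and Kx: "\<forall>i<CARD('n) - 1. K *v x i = 0" for K
  proof -
    have "K *v v = 0" if "w \<bullet> v = 0" for v
      using linear_eq_0_on_span[OF matrix_vector_mul_linear, of "x ` {..<CARD('n) - 1}" K v]
        Kx x that by auto
    moreover have "transpose K = K"
      using \<open>K \<in> L\<close> assms(2) by (auto simp: sym_mats_def)
    ultimately obtain c where c: "K = c *\<^sub>R outer w"
      using sym_matrix_eq_scaleR_outer_if_vanishing_on_hyperplane \<open>w \<noteq> 0\<close> by metis
    have "c = 0"
    proof (rule ccontr)
      assume "c \<noteq> 0"
      then have "outer w = (1 / c) *\<^sub>R K"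
        by (simp add: c)
      then show False
        using \<open>K \<in> L\<close> assms(1,4) subspace_scale by metis
    qed
    then show "K = 0"
      by (simp add: c)
  qed
  then show ?thesis
    unfolding n_estimable_def by blast
qed

definition indicator_vec :: "'n set \<Rightarrow> real^'n" where
  "indicator_vec B = (\<chi> i. if i \<in> B then 1 else 0)"

lemma outer_indicator_vec_nth:
  "outer (indicator_vec B) $ i $ j = (if i \<in> B \<and> j \<in> B then 1 else 0)"
  by (simp add: outer_def indicator_vec_def)

lemma sum_outer_indicator_vec_nth:
  "(\<Sum>B\<in>S. d B *\<^sub>R outer (indicator_vec B)) $ i $ j = (\<Sum>B\<in>{B\<in>S. i \<in> B \<and> j \<in> B}. d B)"
  by (simp add: outer_indicator_vec_nth if_distrib sum.inter_filter cong: if_cong)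

lemma inj_outer_indicator_vec: "inj (\<lambda>B. outer (indicator_vec B))"
proof
  fix A B :: "'n::finite set"
  assume "outer (indicator_vec A) = outer (indicator_vec B)"
  then have diag: "outer (indicator_vec A) $ i $ i = outer (indicator_vec B) $ i $ i" for i
    by simp
  have "i \<in> A \<longleftrightarrow> i \<in> B" for i
    using diag[of i] by (auto simp: outer_indicator_vec_nth split: if_splits)
  then show "A = B"
    by blast
qed

definition small_subsets :: "'n set set" where
  "small_subsets = {B. card B = 1 \<or> card B = 2}"

lemma card_small_subsets: "card (small_subsets :: 'n::finite set set) = T CARD('n)"
proof -
  have "card (small_subsets :: 'n set set) = card {B::'n set. card B = 1} + card {B::'n set. card B = 2}"
    unfolding small_subsets_def Collect_disj_eq by (rule card_Un_disjoint) auto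
  also have "\<dots> = CARD('n) + (CARD('n) choose 2)"
    using n_subsets[of "UNIV :: 'n set"] by simp
  also have "\<dots> = T CARD('n)"
    unfolding T_def choose_two by (cases "CARD('n)") (auto simp: algebra_simps)
  finally show ?thesis .
qed

lemma small_subsets_containing_pair:
  assumes "i \<noteq> j"
  shows "{B\<in>small_subsets. i \<in> B \<and> j \<in> B} = {{i, j}}"
proof (intro equalityI subsetI)
  fix B assume "B \<in> {B\<in>small_subsets. i \<in> B \<and> j \<in> B}"
  then have "{i, j} \<subseteq> B" "card B \<le> 2" "finite B"
    by (auto simp: small_subsets_def intro: card_ge_0_finite)
  moreover have "card {i, j} = 2"
    using assms by simp
  ultimately have "{i, j} = B"
    by (intro card_seteq) simp_all
  then show "B \<in> {{i, j}}"
    by simp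
qed (use assms in \<open>simp add: small_subsets_def\<close>)

lemma small_subsets_containing:
  "{B\<in>small_subsets. i \<in> B} = insert {i} {B. card B = 2 \<and> i \<in> B}"
  by (auto simp: small_subsets_def card_Suc_eq)

lemma independent_outer_indicator_vec:
  "independent ((\<lambda>B. outer (indicator_vec B)) ` (small_subsets :: 'n::finite set set))"
proof (rule independent_if_scalars_zero)
  show "finite ((\<lambda>B. outer (indicator_vec B)) ` (small_subsets :: 'n set set))"
    by simp
next
  fix f :: "real^'n^'n \<Rightarrow> real" and M :: "real^'n^'n"
  assume sum_zero: "(\<Sum>M\<in>(\<lambda>B. outer (indicator_vec B)) ` small_subsets. f M *\<^sub>R M) = 0"
    and M: "M \<in> (\<lambda>B. outer (indicator_vec B)) ` small_subsets"
  define d where "d B = f (outer (indicator_vec B))" for B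
  have "(\<Sum>B\<in>small_subsets. d B *\<^sub>R outer (indicator_vec B)) = 0"
    using sum_zero by (simp add: sum.reindex inj_on_subset[OF inj_outer_indicator_vec] d_def)
  then have entry: "(\<Sum>B\<in>{B\<in>small_subsets. i \<in> B \<and> j \<in> B}. d B) = 0" for i j
    using sum_outer_indicator_vec_nth[of d small_subsets i j] by simp
  have pair: "d {i, j} = 0" if "i \<noteq> j" for i j
    using entry[of i j] by (simp add: small_subsets_containing_pair[OF that])
  have two: "d B = 0" if "card B = 2" for B
    using that pair by (auto simp: card_2_iff)
  have one: "d {i} = 0" for i
    using entry[of i i] two by (simp add: small_subsets_containing)
  have "d B = 0" if "B \<in> small_subsets" for B
    using that one two by (auto simp: small_subsets_def card_Suc_eq)
  with M show "f M = 0"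
    by (auto simp: d_def)
qed

lemma T_le_dim_if_outer_mem:
  fixes L :: "(real^'n^'n) set"
  assumes "\<And>w. w \<noteq> 0 \<Longrightarrow> outer w \<in> L"
  shows "T CARD('n) \<le> dim L"
proof -
  have "indicator_vec B \<noteq> 0" if B: "B \<in> small_subsets" for B :: "'n set"
  proof -
    obtain i where "i \<in> B"
      using B by (force simp: small_subsets_def)
    then have "indicator_vec B $ i \<noteq> 0 $ i"
      by (simp add: indicator_vec_def)
    then show ?thesis
      by metis
  qed
  then have "(\<lambda>B. outer (indicator_vec B)) ` small_subsets \<subseteq> L"
    using assms by blast
  then have "card ((\<lambda>B. outer (indicator_vec B)) ` (small_subsets :: 'n set set)) \<le> dim L"
    using independent_card_le_dim independent_outer_indicator_vec by blast
  then show ?thesis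
    by (simp add: card_image inj_on_subset[OF inj_outer_indicator_vec] card_small_subsets)
qed

theorem proposition5:
  fixes L :: "(real^'n^'n) set"
  assumes "CARD('n) \<ge> 2"
    and "subspace L"
    and "L \<subseteq> sym_mats"
    and "L \<inter> pd_mats \<noteq> {}"
    and "dim L \<le> T (CARD('n)) - T 1"
  shows "n_estimable (CARD('n) - 1) L"
proof (rule ccontr)
  assume "\<not> n_estimable (CARD('n) - 1) L"
  then have "outer w \<in> L" if "w \<noteq> 0" for w :: "real^'n"
    using n_estimable_if_outer_notin[OF assms(2,3) that] by blast
  then have "T CARD('n) \<le> dim L"
    by (rule T_le_dim_if_outer_mem)
  moreover have "T 1 = 1" "T CARD('n) \<ge> 1"
    using assms(1) by (simp_all add: T_def)
  ultimately show False
    using assms(5) by linarith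
qed

end
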